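(* Consider a 1DPNN as described in the context, with $L\ge 2$ layers and a differentiable loss $\epsilon$. For every $l\in\{1,\dots,L-1\}$ and every $j\in\{1,\dots,N_l\}$, $$\frac{\partial \epsilon}{\partial y_{j}^{(l)}}=\sum_{d=1}^{D_{l+1}}d\left(\sum_{i=1}^{N_{l+1}}\tilde{w}_{ijd}^{(l+1)}*g_i^{(l+1)}\right)\odot\left(y_{j}^{(l)}\right)^{d-1},$$ where $\tilde{w}_{ijd}^{(l+1)}\in\mathbb{R}^{K_{l+1}}$ is given by $\tilde{w}_{ijd}^{(l+1)}(k)=w_{ijd}^{(l+1)}(K_{l+1}-1-k)$ for $k\in\{0,\dots,K_{l+1}-1\}$, and $g_i^{(l+1)}\in\mathbb{R}^{M_l+K_{l+1}-1}$ is the zero-padded vector defined for $n\in\{0,\dots,M_l+K_{l+1}-2\}$ by $g_i^{(l+1)}(n)=\frac{\partial \epsilon}{\partial x_i^{(l+1)}}(n-K_{l+1}+1)$ if $K_{l+1}-1\le n\le M_{l+1}+K_{l+1}-2$, and $g_i^{(l+1)}(n)=0$ otherwise. (Here $(y_j^{(l)})^0$ is the all-ones vector.)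
   Context: A 1DPNN with $L\ge 1$ layers is specified as follows. Layer $0$ is the input: $N_0$ signals $y_1^{(0)},\dots,y_{N_0}^{(0)}\in\mathbb{R}^{M_0}$ (entries indexed $0,\dots,M_0-1$). For each layer $l\in\{1,\dots,L\}$ there are positive integers $N_l$ (number of neurons), $K_l$ (kernel size) and $D_l$ (polynomial degree), with $M_l=M_{l-1}-K_l+1\ge 1$. Neuron $i$ of layer $l$ has weight vectors $w_{ijd}^{(l)}\in\mathbb{R}^{K_l}$ (entries indexed $0,\dots,K_l-1$) for $j\in\{1,\dots,N_{l-1}\}$, $d\in\{1,\dots,D_l\}$, a bias $b_i^{(l)}\in\mathbb{R}$, and a differentiable activation function $f_i^{(l)}:\mathbb{R}\to\mathbb{R}$ applied componentwise. Its pre-activation output $x_i^{(l)}\in\mathbb{R}^{M_l}$ and output $y_i^{(l)}\in\mathbb{R}^{M_l}$ are $$x_i^{(l)}(m)=\sum_{j=1}^{N_{l-1}}\sum_{d=1}^{D_l}\sum_{k=0}^{K_l-1}w_{ijd}^{(l)}(k)\,\big(y_j^{(l-1)}(m+k)\big)^d+b_i^{(l)},\qquad y_i^{(l)}=f_i^{(l)}\big(x_i^{(l)}\big),$$ for $m\in\{0,\dots,M_l-1\}$. Notation: $\odot$ is the componentwise (Hadamard) product, powers of vectors are componentwise, and for $a\in\mathbb{R}^{K}$, $b\in\mathbb{R}^{M'}$ with $M'\ge K$, $a*b\in\mathbb{R}^{M'-K+1}$ is defined by $(a*b)(m)=\sum_{k=0}^{K-1}a(k)\,b(m+k)$ (this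 operation is called convolution). A differentiable loss $\epsilon$ is a function of the network output $(y_1^{(L)},\dots,y_{N_L}^{(L)})$ (and a fixed desired output); for each layer $l$ it is viewed as a differentiable function of the outputs $y_1^{(l)},\dots,y_{N_l}^{(l)}$ of layer $l$, with all subsequent layers computed by the forward propagation above. $\frac{\partial\epsilon}{\partial y_i^{(l)}}\in\mathbb{R}^{M_l}$ denotes the vector of partial derivatives of $\epsilon$ with respect to the entries of $y_i^{(l)}$ in this sense, and $\frac{\partial\epsilon}{\partial x_i^{(l)}}=\frac{\partial \epsilon}{\partial y_{i}^{(l)}}\odot (f_i^{(l)})'(x_i^{(l)})$ (derivative applied componentwise). *)

theory Defs
  imports "HOL-Analysis.Analysis"
begin

text \<open>Signals of a layer are functions nat => nat => real: Y i m is entry m of the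
 output of neuron i (neurons indexed 1..N l, entries 0..M l - 1).\<close>

definition conv :: "nat \<Rightarrow> (nat \<Rightarrow> real) \<Rightarrow> (nat \<Rightarrow> real) \<Rightarrow> nat \<Rightarrow> real" where
  "conv Kk a v m = (\<Sum>k<Kk. a k * v (m + k))"

definition pre_act ::
  "(nat \<Rightarrow> nat) \<Rightarrow> (nat \<Rightarrow> nat) \<Rightarrow> (nat \<Rightarrow> nat) \<Rightarrow>
   (nat \<Rightarrow> nat \<Rightarrow> nat \<Rightarrow> nat \<Rightarrow> nat \<Rightarrow> real) \<Rightarrow> (nat \<Rightarrow> nat \<Rightarrow> real) \<Rightarrow>
   nat \<Rightarrow> (nat \<Rightarrow> nat \<Rightarrow> real) \<Rightarrow> nat \<Rightarrow> nat \<Rightarrow> real" where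
  "pre_act N K D w b l Y i m =
     (\<Sum>j=1..N (l-1). \<Sum>d=1..D l. \<Sum>k<K l. w l i j d k * (Y j (m + k)) ^ d) + b l i"

definition layer ::
  "(nat \<Rightarrow> nat) \<Rightarrow> (nat \<Rightarrow> nat) \<Rightarrow> (nat \<Rightarrow> nat) \<Rightarrow> (nat \<Rightarrow> nat) \<Rightarrow>
   (nat \<Rightarrow> nat \<Rightarrow> nat \<Rightarrow> nat \<Rightarrow> nat \<Rightarrow> real) \<Rightarrow> (nat \<Rightarrow> nat \<Rightarrow> real) \<Rightarrow>
   (nat \<Rightarrow> nat \<Rightarrow> real \<Rightarrow> real) \<Rightarrow> nat \<Rightarrow> (nat \<Rightarrow> nat \<Rightarrow> real) \<Rightarrow> nat \<Rightarrow> nat \<Rightarrow> real" where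
  "layer N M K D w b f l Y =
     (\<lambda>i m. if 1 \<le> i \<and> i \<le> N l \<and> m < M l then f l i (pre_act N K D w b l Y i m) else 0)"

primrec fwd ::
  "(nat \<Rightarrow> nat) \<Rightarrow> (nat \<Rightarrow> nat) \<Rightarrow> (nat \<Rightarrow> nat) \<Rightarrow> (nat \<Rightarrow> nat) \<Rightarrow>
   (nat \<Rightarrow> nat \<Rightarrow> nat \<Rightarrow> nat \<Rightarrow> nat \<Rightarrow> real) \<Rightarrow> (nat \<Rightarrow> nat \<Rightarrow> real) \<Rightarrow>
   (nat \<Rightarrow> nat \<Rightarrow> real \<Rightarrow> real) \<Rightarrow> nat \<Rightarrow> nat \<Rightarrow> (nat \<Rightarrow> nat \<Rightarrow> real) \<Rightarrow> nat \<Rightarrow> nat \<Rightarrow> real" where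
  "fwd N M K D w b f l 0 Y = Y"
| "fwd N M K D w b f l (Suc n) Y = fwd N M K D w b f (Suc l) n (layer N M K D w b f (Suc l) Y)"

primrec outputs ::
  "(nat \<Rightarrow> nat) \<Rightarrow> (nat \<Rightarrow> nat) \<Rightarrow> (nat \<Rightarrow> nat) \<Rightarrow> (nat \<Rightarrow> nat) \<Rightarrow>
   (nat \<Rightarrow> nat \<Rightarrow> nat \<Rightarrow> nat \<Rightarrow> nat \<Rightarrow> real) \<Rightarrow> (nat \<Rightarrow> nat \<Rightarrow> real) \<Rightarrow>
   (nat \<Rightarrow> nat \<Rightarrow> real \<Rightarrow> real) \<Rightarrow> (nat \<Rightarrow> nat \<Rightarrow> real) \<Rightarrow> nat \<Rightarrow> nat \<Rightarrow> nat \<Rightarrow> real" where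
  "outputs N M K D w b f y0 0 = y0"
| "outputs N M K D w b f y0 (Suc l) = layer N M K D w b f (Suc l) (outputs N M K D w b f y0 l)"

definition loss_at ::
  "nat \<Rightarrow> (nat \<Rightarrow> nat) \<Rightarrow> (nat \<Rightarrow> nat) \<Rightarrow> (nat \<Rightarrow> nat) \<Rightarrow> (nat \<Rightarrow> nat) \<Rightarrow>
   (nat \<Rightarrow> nat \<Rightarrow> nat \<Rightarrow> nat \<Rightarrow> nat \<Rightarrow> real) \<Rightarrow> (nat \<Rightarrow> nat \<Rightarrow> real) \<Rightarrow>
   (nat \<Rightarrow> nat \<Rightarrow> real \<Rightarrow> real) \<Rightarrow> ((nat \<Rightarrow> nat \<Rightarrow> real) \<Rightarrow> real) \<Rightarrow>
   nat \<Rightarrow> (nat \<Rightarrow> nat \<Rightarrow> real) \<Rightarrow> real" where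
  "loss_at L N M K D w b f \<epsilon> l Y = \<epsilon> (fwd N M K D w b f l (L - l) Y)"

definition perturb :: "(nat \<Rightarrow> nat \<Rightarrow> real) \<Rightarrow> nat \<Rightarrow> nat \<Rightarrow> real \<Rightarrow> nat \<Rightarrow> nat \<Rightarrow> real" where
  "perturb Y j m t = Y(j := (Y j)(m := Y j m + t))"

definition dE_dy ::
  "nat \<Rightarrow> (nat \<Rightarrow> nat) \<Rightarrow> (nat \<Rightarrow> nat) \<Rightarrow> (nat \<Rightarrow> nat) \<Rightarrow> (nat \<Rightarrow> nat) \<Rightarrow>
   (nat \<Rightarrow> nat \<Rightarrow> nat \<Rightarrow> nat \<Rightarrow> nat \<Rightarrow> real) \<Rightarrow> (nat \<Rightarrow> nat \<Rightarrow> real) \<Rightarrow>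
   (nat \<Rightarrow> nat \<Rightarrow> real \<Rightarrow> real) \<Rightarrow> ((nat \<Rightarrow> nat \<Rightarrow> real) \<Rightarrow> real) \<Rightarrow> (nat \<Rightarrow> nat \<Rightarrow> real) \<Rightarrow>
   nat \<Rightarrow> nat \<Rightarrow> nat \<Rightarrow> real" where
  "dE_dy L N M K D w b f \<epsilon> y0 l i m =
     deriv (\<lambda>t. loss_at L N M K D w b f \<epsilon> l (perturb (outputs N M K D w b f y0 l) i m t)) 0"

definition dE_dx ::
  "nat \<Rightarrow> (nat \<Rightarrow> nat) \<Rightarrow> (nat \<Rightarrow> nat) \<Rightarrow> (nat \<Rightarrow> nat) \<Rightarrow> (nat \<Rightarrow> nat) \<Rightarrow>
   (nat \<Rightarrow> nat \<Rightarrow> nat \<Rightarrow> nat \<Rightarrow> nat \<Rightarrow> real) \<Rightarrow> (nat \<Rightarrow> nat \<Rightarrow> real) \<Rightarrow>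
   (nat \<Rightarrow> nat \<Rightarrow> real \<Rightarrow> real) \<Rightarrow> ((nat \<Rightarrow> nat \<Rightarrow> real) \<Rightarrow> real) \<Rightarrow> (nat \<Rightarrow> nat \<Rightarrow> real) \<Rightarrow>
   nat \<Rightarrow> nat \<Rightarrow> nat \<Rightarrow> real" where
  "dE_dx L N M K D w b f \<epsilon> y0 l i m =
     dE_dy L N M K D w b f \<epsilon> y0 l i m *
     deriv (f l i) (pre_act N K D w b l (outputs N M K D w b f y0 (l - 1)) i m)"

text \<open>Frechet differentiability of a loss on R^(N x M), written out for signals
 represented as functions vanishing outside the index box {1..N} x {0..M-1}.\<close>
definition in_box :: "nat \<Rightarrow> nat \<Rightarrow> (nat \<Rightarrow> nat \<Rightarrow> real) \<Rightarrow> bool" where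
  "in_box Nn Mm H \<longleftrightarrow> (\<forall>i m. \<not> (1 \<le> i \<and> i \<le> Nn \<and> m < Mm) \<longrightarrow> H i m = 0)"

definition box_norm :: "nat \<Rightarrow> nat \<Rightarrow> (nat \<Rightarrow> nat \<Rightarrow> real) \<Rightarrow> real" where
  "box_norm Nn Mm H = sqrt (\<Sum>i=1..Nn. \<Sum>m<Mm. (H i m)\<^sup>2)"

definition loss_differentiable :: "nat \<Rightarrow> nat \<Rightarrow> ((nat \<Rightarrow> nat \<Rightarrow> real) \<Rightarrow> real) \<Rightarrow> bool" where
  "loss_differentiable Nn Mm \<epsilon> \<longleftrightarrow>
     (\<forall>Y. in_box Nn Mm Y \<longrightarrow>
        (\<exists>G. \<forall>e>0. \<exists>\<delta>>0. \<forall>H. in_box Nn Mm H \<longrightarrow> box_norm Nn Mm H < \<delta> \<longrightarrow>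
           \<bar>\<epsilon> (\<lambda>i m. Y i m + H i m) - \<epsilon> Y - (\<Sum>i=1..Nn. \<Sum>m<Mm. G i m * H i m)\<bar>
             \<le> e * box_norm Nn Mm H))"

end

theory Submission
  imports Defs "HOL-Library.Function_Algebras"
begin

(* Signals supported on a finite index set form a finite-dimensional space, and every map
   involved is differentiated in Caratheodory's form: the increment F (Y + H) - F Y is a
   combination of the coordinate increments H s with slopes that tend to the gradient as H
   tends to 0. A differentiable loss has such slopes; so does every entry of a layer, because
   (y + h)^d - y^d = h * (y^(d-1) + ... + (y + h)^(d-1)) and the activations are differentiable;
   and substituting slopes into slopes gives the chain rule without any norm estimates.
   Going backwards from the output layer, every loss_at l therefore has a gradient, and the
   chain rule through layer l + 1 writes the partial derivative at (j, m) as a sum over the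
   outputs (i, m') of layer l + 1 that read y_j(m), i.e. m' <= m < m' + K, of
   dE/dx_i(m') * sum_d d * w_ijd(m - m') * y_j(m)^(d-1).
   Reindexing by k = m - m' turns this correlation into the convolution of the flipped
   kernel with the zero-padded dE/dx. *)

type_synonym signal = "nat \<Rightarrow> nat \<Rightarrow> real"

section \<open>Caratheodory gradients of functionals on signals\<close>

lemma tendsto_fun_iff:
  fixes f :: "'a \<Rightarrow> 'b \<Rightarrow> 'c::topological_space"
  shows "(f \<longlongrightarrow> l) F \<longleftrightarrow> (\<forall>i. ((\<lambda>x. f x i) \<longlongrightarrow> l i) F)"
  using limitin_componentwise[of "\<lambda>_. euclidean" UNIV f l F]
  by (simp add: euclidean_product_topology)

definition supported_on :: "(nat \<times> nat) set \<Rightarrow> signal \<Rightarrow> bool" where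
  "supported_on S H \<longleftrightarrow> (\<forall>i m. (i, m) \<notin> S \<longrightarrow> H i m = 0)"

text \<open>Signals carry the product topology of pointwise convergence; on the signals supported
  on a finite set it is the Euclidean topology.\<close>
definition nhds0_on :: "(nat \<times> nat) set \<Rightarrow> signal filter" where
  "nhds0_on S = inf (nhds 0) (principal {H. supported_on S H})"

lemma tendsto_eval_nhds0_on [tendsto_intros]: "((\<lambda>H. H i m) \<longlongrightarrow> 0) (nhds0_on S)"
proof -
  have "((\<lambda>H::signal. H) \<longlongrightarrow> 0) (nhds 0)" by (rule filterlim_ident)
  then have "((\<lambda>H::signal. H i m) \<longlongrightarrow> 0) (nhds 0)" by (simp add: tendsto_fun_iff)
  moreover have "nhds0_on S \<le> nhds 0" unfolding nhds0_on_def by (rule inf_le1)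
  ultimately show ?thesis by (rule tendsto_mono[rotated])
qed

lemma eventually_supported_nhds0_on: "eventually (supported_on S) (nhds0_on S)"
  unfolding nhds0_on_def by (simp add: eventually_inf_principal)

lemma filterlim_nhds0_on:
  assumes "\<And>i m. ((\<lambda>x. E x i m) \<longlongrightarrow> 0) F" and "eventually (\<lambda>x. supported_on S (E x)) F"
  shows "filterlim E (nhds0_on S) F"
proof -
  have "(E \<longlongrightarrow> 0) F" using assms(1) by (simp add: tendsto_fun_iff)
  then show ?thesis unfolding nhds0_on_def using assms(2)
    by (simp add: filterlim_inf filterlim_principal)
qed

definition has_carat_gradient ::
  "(nat \<times> nat) set \<Rightarrow> (signal \<Rightarrow> real) \<Rightarrow> signal \<Rightarrow> (nat \<times> nat \<Rightarrow> real) \<Rightarrow> bool" where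
  "has_carat_gradient S F Y G \<longleftrightarrow> (\<exists>\<phi>.
     (\<forall>H. supported_on S H \<longrightarrow>
        F (\<lambda>i m. Y i m + H i m) - F Y = (\<Sum>s\<in>S. \<phi> s H * H (fst s) (snd s))) \<and>
     (\<forall>s\<in>S. (\<phi> s \<longlongrightarrow> G s) (nhds0_on S)))"

lemma has_carat_gradientI:
  assumes "\<And>H. supported_on S H \<Longrightarrow>
      F (\<lambda>i m. Y i m + H i m) - F Y = (\<Sum>s\<in>S. \<phi> s H * H (fst s) (snd s))"
    and "\<And>s. s \<in> S \<Longrightarrow> (\<phi> s \<longlongrightarrow> G s) (nhds0_on S)"
  shows "has_carat_gradient S F Y G"
  using assms unfolding has_carat_gradient_def by blast

lemma has_carat_gradientE:
  assumes "has_carat_gradient S F Y G"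
  obtains \<phi> where "\<And>H. supported_on S H \<Longrightarrow>
      F (\<lambda>i m. Y i m + H i m) - F Y = (\<Sum>s\<in>S. \<phi> s H * H (fst s) (snd s))"
    and "\<And>s. s \<in> S \<Longrightarrow> (\<phi> s \<longlongrightarrow> G s) (nhds0_on S)"
  using assms that unfolding has_carat_gradient_def by auto

lemma has_carat_gradient_increment_tendsto:
  assumes "has_carat_gradient S F Y G" and "finite S"
  shows "((\<lambda>H. F (\<lambda>i m. Y i m + H i m) - F Y) \<longlongrightarrow> 0) (nhds0_on S)"
proof -
  obtain \<phi> where incr: "\<And>H. supported_on S H \<Longrightarrow>
      F (\<lambda>i m. Y i m + H i m) - F Y = (\<Sum>s\<in>S. \<phi> s H * H (fst s) (snd s))"
    and slope: "\<And>s. s \<in> S \<Longrightarrow> (\<phi> s \<longlongrightarrow> G s) (nhds0_on S)"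
    using assms(1) by (rule has_carat_gradientE) blast
  have "((\<lambda>H. \<Sum>s\<in>S. \<phi> s H * H (fst s) (snd s)) \<longlongrightarrow> (\<Sum>s\<in>S. G s * 0)) (nhds0_on S)"
    by (intro tendsto_sum tendsto_mult slope tendsto_eval_nhds0_on)
  then have "((\<lambda>H. \<Sum>s\<in>S. \<phi> s H * H (fst s) (snd s)) \<longlongrightarrow> 0) (nhds0_on S)" by simp
  moreover have "eventually (\<lambda>H. (\<Sum>s\<in>S. \<phi> s H * H (fst s) (snd s)) =
      F (\<lambda>i m. Y i m + H i m) - F Y) (nhds0_on S)"
    using eventually_supported_nhds0_on by (rule eventually_mono) (simp add: incr)
  ultimately show ?thesis by (rule Lim_transform_eventually)
qed

lemma has_carat_gradient_imp_has_real_derivative: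
  assumes "has_carat_gradient S F Y G" and "finite S" and "(j, m) \<in> S"
  shows "((\<lambda>t. F (perturb Y j m t)) has_real_derivative G (j, m)) (at 0)"
proof -
  obtain \<phi> where incr: "\<And>H. supported_on S H \<Longrightarrow>
      F (\<lambda>i m. Y i m + H i m) - F Y = (\<Sum>s\<in>S. \<phi> s H * H (fst s) (snd s))"
    and slope: "\<And>s. s \<in> S \<Longrightarrow> (\<phi> s \<longlongrightarrow> G s) (nhds0_on S)"
    using assms(1) by (rule has_carat_gradientE) blast
  define E where "E t = (\<lambda>i n. if i = j \<and> n = m then t else (0::real))" for t
  have E_supp: "supported_on S (E t)" for t
    using assms(3) unfolding supported_on_def E_def by auto
  have E_eval: "E t (fst s) (snd s) = (if s = (j, m) then t else 0)" for t s
    by (cases s) (simp add: E_def)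
  have "F (perturb Y j m t) - F Y = (\<Sum>s\<in>S. \<phi> s (E t) * E t (fst s) (snd s))" for t
  proof -
    have "perturb Y j m t = (\<lambda>i n. Y i n + E t i n)"
      unfolding perturb_def E_def by (auto simp: fun_eq_iff)
    then show ?thesis using incr[OF E_supp] by simp
  qed
  also have "(\<Sum>s\<in>S. \<phi> s (E t) * E t (fst s) (snd s)) = \<phi> (j, m) (E t) * t" for t
    using assms(2,3) by (simp add: E_eval if_distrib[of "(*) _"] cong: if_cong)
  finally have quot: "\<phi> (j, m) (E t) = (F (perturb Y j m t) - F (perturb Y j m 0)) / (t - 0)"
    if "t \<noteq> 0" for t
    using that by (simp add: perturb_def)
  have "filterlim E (nhds0_on S) (at 0)"
  proof (rule filterlim_nhds0_on)
    show "((\<lambda>t. E t i n) \<longlongrightarrow> 0) (at 0)" for i n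
      unfolding E_def
      by (cases "i = j \<and> n = m")
        (simp_all only: simp_thms if_True if_False tendsto_ident_at tendsto_const)
  qed (simp add: E_supp)
  with slope[OF assms(3)] have "((\<lambda>t. \<phi> (j, m) (E t)) \<longlongrightarrow> G (j, m)) (at 0)"
    by (rule filterlim_compose)
  then have "((\<lambda>t. (F (perturb Y j m t) - F (perturb Y j m 0)) / (t - 0)) \<longlongrightarrow> G (j, m)) (at 0)"
    by (rule Lim_transform_eventually) (auto simp: eventually_at_filter quot)
  then show ?thesis by (simp add: has_field_derivative_iff)
qed

lemma has_carat_gradient_chain:
  assumes "finite S"
    and outer: "has_carat_gradient T F (\<Phi> Y) G"
    and inner: "\<And>t. t \<in> T \<Longrightarrow> has_carat_gradient S (\<lambda>Z. \<Phi> Z (fst t) (snd t)) Y (J t)"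
    and supp: "\<And>Z. supported_on T (\<Phi> Z)"
  shows "has_carat_gradient S (\<lambda>Z. F (\<Phi> Z)) Y (\<lambda>s. \<Sum>t\<in>T. G t * J t s)"
proof -
  obtain \<psi> where outer_incr: "\<And>H. supported_on T H \<Longrightarrow>
      F (\<lambda>i m. \<Phi> Y i m + H i m) - F (\<Phi> Y) = (\<Sum>t\<in>T. \<psi> t H * H (fst t) (snd t))"
    and outer_slope: "\<And>t. t \<in> T \<Longrightarrow> (\<psi> t \<longlongrightarrow> G t) (nhds0_on T)"
    using outer by (rule has_carat_gradientE) blast
  obtain A where inner_incr: "\<And>t H. t \<in> T \<Longrightarrow> supported_on S H \<Longrightarrow>
      \<Phi> (\<lambda>i m. Y i m + H i m) (fst t) (snd t) - \<Phi> Y (fst t) (snd t) =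
        (\<Sum>s\<in>S. A t s H * H (fst s) (snd s))"
    and inner_slope: "\<And>t s. t \<in> T \<Longrightarrow> s \<in> S \<Longrightarrow> (A t s \<longlongrightarrow> J t s) (nhds0_on S)"
  proof -
    have "\<forall>t\<in>T. \<exists>\<phi>. (\<forall>H. supported_on S H \<longrightarrow>
        \<Phi> (\<lambda>i m. Y i m + H i m) (fst t) (snd t) - \<Phi> Y (fst t) (snd t) =
          (\<Sum>s\<in>S. \<phi> s H * H (fst s) (snd s))) \<and> (\<forall>s\<in>S. (\<phi> s \<longlongrightarrow> J t s) (nhds0_on S))"
      using inner unfolding has_carat_gradient_def by blast
    then show thesis by (auto intro: that dest!: bchoice)
  qed
  define \<Delta> where "\<Delta> H = (\<lambda>i n. \<Phi> (\<lambda>i m. Y i m + H i m) i n - \<Phi> Y i n)" for H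
  have \<Delta>_supp: "supported_on T (\<Delta> H)" for H
    using supp unfolding supported_on_def \<Delta>_def by simp
  have \<Delta>_tendsto: "filterlim \<Delta> (nhds0_on T) (nhds0_on S)"
  proof (rule filterlim_nhds0_on)
    show "((\<lambda>H. \<Delta> H i n) \<longlongrightarrow> 0) (nhds0_on S)" for i n
    proof (cases "(i, n) \<in> T")
      case True
      show ?thesis
        using has_carat_gradient_increment_tendsto[OF inner[OF True] \<open>finite S\<close>]
        by (simp add: \<Delta>_def)
    next
      case False
      then show ?thesis using \<Delta>_supp by (simp add: supported_on_def)
    qed
  qed (simp add: \<Delta>_supp)
  show ?thesis
  proof (rule has_carat_gradientI[where \<phi> = "\<lambda>s H. \<Sum>t\<in>T. \<psi> t (\<Delta> H) * A t s H"])
    fix H assume H: "supported_on S H"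
    have "F (\<Phi> (\<lambda>i m. Y i m + H i m)) - F (\<Phi> Y) = (\<Sum>t\<in>T. \<psi> t (\<Delta> H) * \<Delta> H (fst t) (snd t))"
      using outer_incr[OF \<Delta>_supp, of H] by (simp add: \<Delta>_def)
    also have "\<dots> = (\<Sum>t\<in>T. \<Sum>s\<in>S. \<psi> t (\<Delta> H) * A t s H * H (fst s) (snd s))"
      by (rule sum.cong) (simp_all add: \<Delta>_def inner_incr[OF _ H] sum_distrib_left mult.assoc)
    also have "\<dots> = (\<Sum>s\<in>S. (\<Sum>t\<in>T. \<psi> t (\<Delta> H) * A t s H) * H (fst s) (snd s))"
      by (subst sum.swap) (simp add: sum_distrib_right)
    finally show "F (\<Phi> (\<lambda>i m. Y i m + H i m)) - F (\<Phi> Y) =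
        (\<Sum>s\<in>S. (\<Sum>t\<in>T. \<psi> t (\<Delta> H) * A t s H) * H (fst s) (snd s))" .
  next
    fix s assume "s \<in> S"
    show "((\<lambda>H. \<Sum>t\<in>T. \<psi> t (\<Delta> H) * A t s H) \<longlongrightarrow> (\<Sum>t\<in>T. G t * J t s)) (nhds0_on S)"
      by (intro tendsto_sum tendsto_mult filterlim_compose[OF outer_slope \<Delta>_tendsto]
          inner_slope \<open>s \<in> S\<close>)
  qed
qed

lemma has_carat_gradient_compose_real:
  assumes "has_carat_gradient S F Y G" and "finite S" and "g differentiable (at (F Y))"
  shows "has_carat_gradient S (\<lambda>Z. g (F Z)) Y (\<lambda>s. deriv g (F Y) * G s)"
proof -
  obtain \<phi> where incr: "\<And>H. supported_on S H \<Longrightarrow>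
      F (\<lambda>i m. Y i m + H i m) - F Y = (\<Sum>s\<in>S. \<phi> s H * H (fst s) (snd s))"
    and slope: "\<And>s. s \<in> S \<Longrightarrow> (\<phi> s \<longlongrightarrow> G s) (nhds0_on S)"
    using assms(1) by (rule has_carat_gradientE) blast
  obtain c where c_incr: "\<And>z. g z - g (F Y) = c z * (z - F Y)"
    and c_cont: "isCont c (F Y)" and c_at: "c (F Y) = deriv g (F Y)"
    using assms(3) by (metis CARAT_DERIV DERIV_deriv_iff_real_differentiable)
  have "((\<lambda>H. F (\<lambda>i m. Y i m + H i m)) \<longlongrightarrow> F Y) (nhds0_on S)"
    using has_carat_gradient_increment_tendsto[OF assms(1,2)] by (rule LIM_zero_cancel)
  then have c_tendsto: "((\<lambda>H. c (F (\<lambda>i m. Y i m + H i m))) \<longlongrightarrow> deriv g (F Y)) (nhds0_on S)"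
    unfolding c_at[symmetric] by (rule isCont_tendsto_compose[OF c_cont])
  show ?thesis
  proof (rule has_carat_gradientI[where \<phi> = "\<lambda>s H. c (F (\<lambda>i m. Y i m + H i m)) * \<phi> s H"])
    fix H assume "supported_on S H"
    then show "g (F (\<lambda>i m. Y i m + H i m)) - g (F Y) =
        (\<Sum>s\<in>S. c (F (\<lambda>i m. Y i m + H i m)) * \<phi> s H * H (fst s) (snd s))"
      by (simp only: c_incr incr sum_distrib_left mult.assoc)
  qed (intro tendsto_mult c_tendsto slope)
qed

section \<open>Differentiable losses\<close>

definition index_box :: "nat \<Rightarrow> nat \<Rightarrow> (nat \<times> nat) set" where
  "index_box Nn Mm = {1..Nn} \<times> {..<Mm}"

lemma finite_index_box [simp]: "finite (index_box Nn Mm)"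
  by (simp add: index_box_def)

lemma sum_index_box: "(\<Sum>i=1..Nn. \<Sum>m<Mm. g i m) = (\<Sum>s\<in>index_box Nn Mm. g (fst s) (snd s))"
  by (simp add: index_box_def sum.cartesian_product case_prod_beta)

lemma in_box_iff_supported_on: "in_box Nn Mm H \<longleftrightarrow> supported_on (index_box Nn Mm) H"
  unfolding in_box_def supported_on_def index_box_def by auto

definition signal_norm :: "(nat \<times> nat) set \<Rightarrow> signal \<Rightarrow> real" where
  "signal_norm S H = sqrt (\<Sum>s\<in>S. (H (fst s) (snd s))\<^sup>2)"

lemma box_norm_eq_signal_norm: "box_norm Nn Mm H = signal_norm (index_box Nn Mm) H"
  unfolding box_norm_def signal_norm_def sum_index_box ..

lemma abs_le_signal_norm:
  assumes "finite S" and "s \<in> S"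
  shows "\<bar>H (fst s) (snd s)\<bar> \<le> signal_norm S H"
proof -
  have "(H (fst s) (snd s))\<^sup>2 \<le> (\<Sum>s\<in>S. (H (fst s) (snd s))\<^sup>2)"
    using assms by (intro member_le_sum) auto
  then show ?thesis unfolding signal_norm_def using real_sqrt_le_mono by fastforce
qed

lemma signal_norm_eq_0_imp_zero:
  assumes "finite S" and "supported_on S H" and "signal_norm S H = 0"
  shows "H = 0"
proof (intro ext)
  fix i n
  show "H i n = 0 i n"
    using abs_le_signal_norm[OF assms(1), of "(i, n)" H] assms(2,3)
    by (cases "(i, n) \<in> S") (auto simp: supported_on_def)
qed

lemma tendsto_signal_norm: "(signal_norm S \<longlongrightarrow> 0) (nhds0_on S)"
proof -
  have "(signal_norm S \<longlongrightarrow> sqrt (\<Sum>s\<in>S. 0\<^sup>2)) (nhds0_on S)"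
    unfolding signal_norm_def by (intro tendsto_intros)
  then show ?thesis by simp
qed

text \<open>For \<open>n = 0\<close> the quotient is \<open>0\<close> because \<open>x / 0 = 0\<close>.\<close>
lemma abs_mult_divide_square_le:
  fixes r h n c :: real
  assumes "\<bar>r\<bar> \<le> c * n" and "\<bar>h\<bar> \<le> n" and "0 \<le> c"
  shows "\<bar>r * h / n\<^sup>2\<bar> \<le> c"
proof (cases "n = 0")
  case False
  then have "n > 0" using assms(2) by linarith
  have "\<bar>r * h / n\<^sup>2\<bar> = \<bar>r\<bar> * \<bar>h\<bar> / n\<^sup>2" by (simp add: abs_mult)
  also have "\<dots> \<le> (c * n) * n / n\<^sup>2"
    using assms \<open>n > 0\<close> by (intro divide_right_mono mult_mono) auto
  also have "\<dots> = c" using \<open>n > 0\<close> by (simp add: power2_eq_square)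
  finally show ?thesis .
qed (use assms in simp)

lemma tendsto_remainder_slope:
  assumes "finite S" and "s \<in> S"
    and little_o: "\<And>e. e > 0 \<Longrightarrow> \<exists>\<delta>>0. \<forall>H. supported_on S H \<longrightarrow> signal_norm S H < \<delta> \<longrightarrow>
        \<bar>r H\<bar> \<le> e * signal_norm S H"
  shows "((\<lambda>H. r H * H (fst s) (snd s) / (signal_norm S H)\<^sup>2) \<longlongrightarrow> 0) (nhds0_on S)"
proof (rule tendstoI)
  fix e :: real assume "e > 0"
  obtain \<delta> where "\<delta> > 0" and \<delta>: "\<And>H. supported_on S H \<Longrightarrow> signal_norm S H < \<delta> \<Longrightarrow>
      \<bar>r H\<bar> \<le> e / 2 * signal_norm S H"
    using little_o[of "e / 2"] \<open>e > 0\<close> by auto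
  have "eventually (\<lambda>H. signal_norm S H < \<delta>) (nhds0_on S)"
    using tendsto_signal_norm \<open>\<delta> > 0\<close> by (rule order_tendstoD)
  then show "eventually (\<lambda>H. dist (r H * H (fst s) (snd s) / (signal_norm S H)\<^sup>2) 0 < e)
      (nhds0_on S)"
    using eventually_supported_nhds0_on
  proof eventually_elim
    case (elim H)
    have "\<bar>r H * H (fst s) (snd s) / (signal_norm S H)\<^sup>2\<bar> \<le> e / 2"
      using \<delta>[OF elim(2,1)] abs_le_signal_norm[OF assms(1,2)] \<open>e > 0\<close>
      by (intro abs_mult_divide_square_le) auto
    then show ?case unfolding dist_real_def diff_zero using \<open>e > 0\<close> by linarith
  qed
qed

lemma little_o_imp_has_carat_gradient:
  assumes "finite S"
    and little_o: "\<And>e. e > 0 \<Longrightarrow> \<exists>\<delta>>0. \<forall>H. supported_on S H \<longrightarrow> signal_norm S H < \<delta> \<longrightarrow>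
        \<bar>F (\<lambda>i m. Y i m + H i m) - F Y - (\<Sum>s\<in>S. G s * H (fst s) (snd s))\<bar>
          \<le> e * signal_norm S H"
  shows "has_carat_gradient S F Y G"
proof -
  define r where "r H = F (\<lambda>i m. Y i m + H i m) - F Y - (\<Sum>s\<in>S. G s * H (fst s) (snd s))" for H
  define \<phi> where "\<phi> s H = G s + r H * H (fst s) (snd s) / (signal_norm S H)\<^sup>2" for s H
  show ?thesis
  proof (rule has_carat_gradientI[where \<phi> = \<phi>])
    fix H assume H: "supported_on S H"
    show "F (\<lambda>i m. Y i m + H i m) - F Y = (\<Sum>s\<in>S. \<phi> s H * H (fst s) (snd s))"
    proof (cases "signal_norm S H = 0")
      case True
      then show ?thesis using signal_norm_eq_0_imp_zero[OF assms(1) H] by (simp add: \<phi>_def)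
    next
      case False
      have norm_sq: "(signal_norm S H)\<^sup>2 = (\<Sum>s\<in>S. (H (fst s) (snd s))\<^sup>2)"
        unfolding signal_norm_def by (simp add: sum_nonneg)
      have "(\<Sum>s\<in>S. \<phi> s H * H (fst s) (snd s)) = (\<Sum>s\<in>S. G s * H (fst s) (snd s))
          + r H / (signal_norm S H)\<^sup>2 * (\<Sum>s\<in>S. (H (fst s) (snd s))\<^sup>2)"
        unfolding \<phi>_def
        by (simp add: algebra_simps power2_eq_square sum.distrib sum_distrib_left
            sum_divide_distrib)
      also have "\<dots> = (\<Sum>s\<in>S. G s * H (fst s) (snd s)) + r H"
        using False by (simp add: norm_sq[symmetric])
      finally show ?thesis by (simp add: r_def)
    qed
  next
    fix s assume "s \<in> S"
    have "(\<phi> s \<longlongrightarrow> G s + 0) (nhds0_on S)"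
      unfolding \<phi>_def
      using tendsto_remainder_slope[OF assms(1) \<open>s \<in> S\<close>, of r] little_o
      by (intro tendsto_add tendsto_const) (simp add: r_def)
    then show "(\<phi> s \<longlongrightarrow> G s) (nhds0_on S)" by simp
  qed
qed

lemma loss_differentiable_has_carat_gradient:
  assumes "loss_differentiable Nn Mm \<epsilon>" and "in_box Nn Mm Y"
  obtains G where "has_carat_gradient (index_box Nn Mm) \<epsilon> Y G"
proof -
  obtain G where G: "\<forall>e>0. \<exists>\<delta>>0. \<forall>H. in_box Nn Mm H \<longrightarrow> box_norm Nn Mm H < \<delta> \<longrightarrow>
      \<bar>\<epsilon> (\<lambda>i m. Y i m + H i m) - \<epsilon> Y - (\<Sum>i=1..Nn. \<Sum>m<Mm. G i m * H i m)\<bar>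
        \<le> e * box_norm Nn Mm H"
    using assms unfolding loss_differentiable_def by blast
  have "has_carat_gradient (index_box Nn Mm) \<epsilon> Y (\<lambda>s. G (fst s) (snd s))"
  proof (rule little_o_imp_has_carat_gradient)
    show "\<exists>\<delta>>0. \<forall>H. supported_on (index_box Nn Mm) H \<longrightarrow> signal_norm (index_box Nn Mm) H < \<delta> \<longrightarrow>
        \<bar>\<epsilon> (\<lambda>i m. Y i m + H i m) - \<epsilon> Y - (\<Sum>s\<in>index_box Nn Mm. G (fst s) (snd s) * H (fst s) (snd s))\<bar>
          \<le> e * signal_norm (index_box Nn Mm) H" if "e > 0" for e
      using G that unfolding in_box_iff_supported_on box_norm_eq_signal_norm sum_index_box by blast
  qed simp
  then show thesis by (rule that)
qed

section \<open>Backpropagation through the layers\<close>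

definition power_slope :: "real \<Rightarrow> real \<Rightarrow> nat \<Rightarrow> real" where
  "power_slope a h d = (\<Sum>p<d. a ^ (d - 1 - p) * (a + h) ^ p)"

lemma power_increment: "(a + h) ^ d - a ^ d = power_slope a h d * h"
  unfolding power_slope_def using power_diff_sumr2[of "a + h" d a] by simp

lemma power_slope_zero [simp]: "power_slope a 0 d = real d * a ^ (d - 1)"
proof -
  have "power_slope a 0 d = (\<Sum>p<d. a ^ (d - 1))"
    unfolding power_slope_def by (rule sum.cong) (auto simp: power_add[symmetric])
  then show ?thesis by simp
qed

lemma sum_shifted_window:
  fixes g :: "nat \<Rightarrow> real"
  assumes "m + k \<le> n"
  shows "(\<Sum>p<k. g p) = (\<Sum>q<n. if m \<le> q \<and> q < m + k then g (q - m) else 0)"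
proof -
  have "(\<Sum>q<n. if m \<le> q \<and> q < m + k then g (q - m) else 0) = (\<Sum>q\<in>{m..<m + k}. g (q - m))"
    using assms by (intro sum.mono_neutral_cong_right) auto
  also have "\<dots> = (\<Sum>p<k. g p)"
    using sum.shift_bounds_nat_ivl[of "\<lambda>q. g (q - m)" 0 m k]
    by (simp add: lessThan_atLeast0 add.commute)
  finally show ?thesis by simp
qed

text \<open>At \<open>H = 0\<close> the slopes form the gradient of \<open>pre_act\<close>.\<close>
definition pre_act_slope ::
  "(nat \<Rightarrow> nat) \<Rightarrow> (nat \<Rightarrow> nat) \<Rightarrow> (nat \<Rightarrow> nat \<Rightarrow> nat \<Rightarrow> nat \<Rightarrow> nat \<Rightarrow> real) \<Rightarrow> nat \<Rightarrow>
   signal \<Rightarrow> signal \<Rightarrow> nat \<Rightarrow> nat \<Rightarrow> nat \<times> nat \<Rightarrow> real" where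
  "pre_act_slope K D w l Y H i m s =
     (if m \<le> snd s \<and> snd s < m + K l
      then \<Sum>d=1..D l. w l i (fst s) d (snd s - m) *
        power_slope (Y (fst s) (snd s)) (H (fst s) (snd s)) d
      else 0)"

lemma pre_act_increment:
  assumes "m + K (Suc l) \<le> M l"
  shows "pre_act N K D w b (Suc l) (\<lambda>j n. Y j n + H j n) i m - pre_act N K D w b (Suc l) Y i m =
    (\<Sum>s\<in>index_box (N l) (M l). pre_act_slope K D w (Suc l) Y H i m s * H (fst s) (snd s))"
proof -
  have "pre_act N K D w b (Suc l) (\<lambda>j n. Y j n + H j n) i m - pre_act N K D w b (Suc l) Y i m =
      (\<Sum>j=1..N l. \<Sum>d=1..D (Suc l). \<Sum>k<K (Suc l).
        w (Suc l) i j d k * ((Y j (m + k) + H j (m + k)) ^ d - Y j (m + k) ^ d))"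
    unfolding pre_act_def by (simp add: sum_subtractf[symmetric] right_diff_distrib)
  also have "\<dots> = (\<Sum>j=1..N l. \<Sum>k<K (Suc l).
      (\<Sum>d=1..D (Suc l). w (Suc l) i j d k * power_slope (Y j (m + k)) (H j (m + k)) d) * H j (m + k))"
    unfolding power_increment sum_distrib_right mult.assoc
    by (rule sum.cong[OF refl], rule sum.swap)
  also have "\<dots> = (\<Sum>j=1..N l. \<Sum>n<M l. pre_act_slope K D w (Suc l) Y H i m (j, n) * H j n)"
    unfolding sum_shifted_window[OF assms] by (intro sum.cong) (auto simp: pre_act_slope_def)
  also have "\<dots> = (\<Sum>s\<in>index_box (N l) (M l).
      pre_act_slope K D w (Suc l) Y H i m s * H (fst s) (snd s))"
    by (simp only: sum_index_box prod.collapse)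
  finally show ?thesis .
qed

lemma pre_act_has_carat_gradient:
  assumes "m + K (Suc l) \<le> M l"
  shows "has_carat_gradient (index_box (N l) (M l))
    (\<lambda>Z. pre_act N K D w b (Suc l) Z i m) Y (pre_act_slope K D w (Suc l) Y 0 i m)"
proof (rule has_carat_gradientI[where \<phi> = "\<lambda>s H. pre_act_slope K D w (Suc l) Y H i m s"])
  fix s
  show "((\<lambda>H. pre_act_slope K D w (Suc l) Y H i m s) \<longlongrightarrow>
      pre_act_slope K D w (Suc l) Y 0 i m s) (nhds0_on (index_box (N l) (M l)))"
  proof (cases "m \<le> snd s \<and> snd s < m + K (Suc l)")
    case True
    have "((\<lambda>H. \<Sum>d=1..D (Suc l). w (Suc l) i (fst s) d (snd s - m) *
        power_slope (Y (fst s) (snd s)) (H (fst s) (snd s)) d) \<longlongrightarrow>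
      (\<Sum>d=1..D (Suc l). w (Suc l) i (fst s) d (snd s - m) *
        power_slope (Y (fst s) (snd s)) 0 d))
      (nhds0_on (index_box (N l) (M l)))"
      unfolding power_slope_def by (intro tendsto_intros)
    then show ?thesis unfolding pre_act_slope_def if_P[OF True] by (simp del: power_slope_zero)
  next
    case False
    show ?thesis unfolding pre_act_slope_def if_not_P[OF False] by (rule tendsto_const)
  qed
qed (rule pre_act_increment[where K = K and l = l and M = M, OF assms])

lemma layer_supported: "supported_on (index_box (N l) (M l)) (layer N M K D w b f l Z)"
  unfolding supported_on_def index_box_def layer_def by auto

lemma layer_has_carat_gradient:
  assumes "M (Suc l) + K (Suc l) = M l + 1" and "\<And>x. f (Suc l) i differentiable (at x)"
    and "(i, m) \<in> index_box (N (Suc l)) (M (Suc l))"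
  shows "has_carat_gradient (index_box (N l) (M l))
    (\<lambda>Z. layer N M K D w b f (Suc l) Z i m) Y
    (\<lambda>s. deriv (f (Suc l) i) (pre_act N K D w b (Suc l) Y i m) *
      pre_act_slope K D w (Suc l) Y 0 i m s)"
proof -
  have "layer N M K D w b f (Suc l) Z i m = f (Suc l) i (pre_act N K D w b (Suc l) Z i m)" for Z
    using assms(3) unfolding layer_def index_box_def by simp
  moreover have "m + K (Suc l) \<le> M l" using assms(1,3) unfolding index_box_def by simp
  ultimately show ?thesis
    using has_carat_gradient_compose_real[OF pre_act_has_carat_gradient finite_index_box assms(2)]
    by simp
qed

lemma loss_at_step:
  assumes "k < L"
  shows "loss_at L N M K D w b f \<epsilon> k =
    (\<lambda>Z. loss_at L N M K D w b f \<epsilon> (Suc k) (layer N M K D w b f (Suc k) Z))"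
proof -
  have "L - k = Suc (L - Suc k)" using assms by simp
  then show ?thesis unfolding loss_at_def by (simp add: fun_eq_iff)
qed

lemma loss_at_backprop:
  assumes "k < L" and "M (Suc k) + K (Suc k) = M k + 1"
    and "\<And>i x. 1 \<le> i \<Longrightarrow> i \<le> N (Suc k) \<Longrightarrow> f (Suc k) i differentiable (at x)"
    and "has_carat_gradient (index_box (N (Suc k)) (M (Suc k)))
      (loss_at L N M K D w b f \<epsilon> (Suc k)) (layer N M K D w b f (Suc k) Y) G"
  shows "has_carat_gradient (index_box (N k) (M k)) (loss_at L N M K D w b f \<epsilon> k) Y
    (\<lambda>s. \<Sum>t\<in>index_box (N (Suc k)) (M (Suc k)).
      G t * (deriv (f (Suc k) (fst t)) (pre_act N K D w b (Suc k) Y (fst t) (snd t)) *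
        pre_act_slope K D w (Suc k) Y 0 (fst t) (snd t) s))"
proof -
  have "has_carat_gradient (index_box (N k) (M k))
      (\<lambda>Z. layer N M K D w b f (Suc k) Z (fst t) (snd t)) Y
      (\<lambda>s. deriv (f (Suc k) (fst t)) (pre_act N K D w b (Suc k) Y (fst t) (snd t)) *
        pre_act_slope K D w (Suc k) Y 0 (fst t) (snd t) s)"
    if "t \<in> index_box (N (Suc k)) (M (Suc k))" for t
  proof -
    obtain i n where t: "t = (i, n)" by (cases t)
    have "1 \<le> i" "i \<le> N (Suc k)" using that by (auto simp: t index_box_def)
    then show ?thesis unfolding t fst_conv snd_conv
      using assms(2,3) that t by (intro layer_has_carat_gradient) auto
  qed
  from has_carat_gradient_chain[OF finite_index_box assms(4) this layer_supported]
  show ?thesis using loss_at_step[OF assms(1)] by simp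
qed

lemma conv_flipped_padded:
  fixes a e :: "nat \<Rightarrow> real"
  assumes "1 \<le> k" and "1 \<le> n"
  shows "conv k (\<lambda>p. a (k - 1 - p))
      (\<lambda>q. if k - 1 \<le> q \<and> q \<le> n + k - 2 then e (q - (k - 1)) else 0) m
    = (\<Sum>q<n. if q \<le> m \<and> m < q + k then a (m - q) * e q else 0)"
proof -
  have reflect: "k - 1 - (k - Suc p) = p" "m + (k - Suc p) - (k - 1) = m - p"
    and window: "k - 1 \<le> m + (k - Suc p) \<and> m + (k - Suc p) \<le> n + k - 2 \<longleftrightarrow>
      p \<le> m \<and> m - p < n"
    if "p < k" for p
    using that assms by arith+
  have "conv k (\<lambda>p. a (k - 1 - p))
      (\<lambda>q. if k - 1 \<le> q \<and> q \<le> n + k - 2 then e (q - (k - 1)) else 0) m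
    = (\<Sum>p<k. a (k - 1 - (k - Suc p)) *
        (if k - 1 \<le> m + (k - Suc p) \<and> m + (k - Suc p) \<le> n + k - 2
         then e (m + (k - Suc p) - (k - 1)) else 0))"
    unfolding conv_def by (rule sum.nat_diff_reindex[symmetric])
  also have "\<dots> = (\<Sum>p<k. if p \<le> m \<and> m - p < n then a p * e (m - p) else 0)"
    by (intro sum.cong refl) (simp only: lessThan_iff reflect window, simp)
  also have "\<dots> = (\<Sum>p\<in>{p. p < k \<and> p \<le> m \<and> m - p < n}. a p * e (m - p))"
    by (subst sum.inter_filter[symmetric]) (auto simp: lessThan_def conj_commute)
  also have "\<dots> = (\<Sum>q\<in>{q. q < n \<and> q \<le> m \<and> m < q + k}. a (m - q) * e q)"
    by (rule sum.reindex_bij_witness[where i = "\<lambda>q. m - q" and j = "\<lambda>p. m - p"]) auto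
  also have "\<dots> = (\<Sum>q<n. if q \<le> m \<and> m < q + k then a (m - q) * e q else 0)"
    by (subst sum.inter_filter[symmetric]) (auto simp: lessThan_def)
  finally show ?thesis .
qed

lemma sum_conv_flipped_padded:
  fixes w :: "nat \<Rightarrow> nat \<Rightarrow> nat \<Rightarrow> real" and e :: "nat \<Rightarrow> nat \<Rightarrow> real"
  assumes "1 \<le> k" and "1 \<le> n"
  shows "(\<Sum>d=1..Dd. real d *
      (\<Sum>i=1..Nn. conv k (\<lambda>p. w i d (k - 1 - p))
        (\<lambda>q. if k - 1 \<le> q \<and> q \<le> n + k - 2 then e i (q - (k - 1)) else 0) m) * y ^ (d - 1))
    = (\<Sum>t\<in>index_box Nn n. e (fst t) (snd t) *
      (if snd t \<le> m \<and> m < snd t + k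
       then \<Sum>d=1..Dd. w (fst t) d (m - snd t) * (real d * y ^ (d - 1)) else 0))"
proof -
  define c where "c d i q = (if q \<le> m \<and> m < q + k
    then e i q * w i d (m - q) * (real d * y ^ (d - 1)) else 0)" for d i q
  have "(\<Sum>d=1..Dd. real d *
      (\<Sum>i=1..Nn. conv k (\<lambda>p. w i d (k - 1 - p))
        (\<lambda>q. if k - 1 \<le> q \<and> q \<le> n + k - 2 then e i (q - (k - 1)) else 0) m) * y ^ (d - 1))
    = (\<Sum>d=1..Dd. \<Sum>i=1..Nn. \<Sum>q<n. c d i q)"
    unfolding conv_flipped_padded[OF assms] sum_distrib_left sum_distrib_right c_def
    by (intro sum.cong refl) auto
  also have "\<dots> = (\<Sum>i=1..Nn. \<Sum>q<n. \<Sum>d=1..Dd. c d i q)"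
    by (simp only: sum.swap[of _ "{1..Dd}"])
  also have "\<dots> = (\<Sum>t\<in>index_box Nn n. e (fst t) (snd t) *
      (if snd t \<le> m \<and> m < snd t + k
       then \<Sum>d=1..Dd. w (fst t) d (m - snd t) * (real d * y ^ (d - 1)) else 0))"
    unfolding sum_index_box c_def by (intro sum.cong refl) (auto simp: sum_distrib_left mult.assoc)
  finally show ?thesis .
qed

locale polynomial_network =
  fixes L :: nat and N M K D :: "nat \<Rightarrow> nat"
    and w :: "nat \<Rightarrow> nat \<Rightarrow> nat \<Rightarrow> nat \<Rightarrow> nat \<Rightarrow> real" and b :: "nat \<Rightarrow> nat \<Rightarrow> real"
    and f :: "nat \<Rightarrow> nat \<Rightarrow> real \<Rightarrow> real" and \<epsilon> :: "signal \<Rightarrow> real"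
  assumes lengths: "\<And>l. 1 \<le> l \<Longrightarrow> l \<le> L \<Longrightarrow> M l + K l = M (l - 1) + 1"
    and activation_differentiable: "\<And>l i x. 1 \<le> l \<Longrightarrow> l \<le> L \<Longrightarrow> 1 \<le> i \<Longrightarrow> i \<le> N l \<Longrightarrow>
      f l i differentiable (at x)"
    and output_loss_differentiable: "loss_differentiable (N L) (M L) \<epsilon>"
begin

lemma loss_at_has_carat_gradient:
  assumes "k \<le> L" and "supported_on (index_box (N k) (M k)) Y"
  shows "\<exists>G. has_carat_gradient (index_box (N k) (M k)) (loss_at L N M K D w b f \<epsilon> k) Y G"
  using assms
proof (induction "L - k" arbitrary: k Y)
  case 0
  then have "k = L" by simp
  moreover obtain G where "has_carat_gradient (index_box (N L) (M L)) \<epsilon> Y G"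
    using loss_differentiable_has_carat_gradient[OF output_loss_differentiable] 0(3) \<open>k = L\<close>
    unfolding in_box_iff_supported_on by blast
  ultimately show ?case by (auto simp: loss_at_def)
next
  case (Suc n)
  then have "k < L" by simp
  then obtain G where G: "has_carat_gradient (index_box (N (Suc k)) (M (Suc k)))
      (loss_at L N M K D w b f \<epsilon> (Suc k)) (layer N M K D w b f (Suc k) Y) G"
    using Suc(1)[of "Suc k"] Suc(2) layer_supported by fastforce
  have "M (Suc k) + K (Suc k) = M k + 1" using lengths[of "Suc k"] \<open>k < L\<close> by simp
  from loss_at_backprop[OF \<open>k < L\<close> this _ G] show ?case
    using activation_differentiable[of "Suc k"] \<open>k < L\<close> by auto
qed

lemma loss_at_has_real_derivative_backprop:
  assumes "l < L" and "(j, m) \<in> index_box (N l) (M l)"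
  shows "((\<lambda>t. loss_at L N M K D w b f \<epsilon> l (perturb (outputs N M K D w b f y0 l) j m t))
    has_real_derivative
      (\<Sum>t\<in>index_box (N (Suc l)) (M (Suc l)).
        dE_dx L N M K D w b f \<epsilon> y0 (Suc l) (fst t) (snd t) *
        pre_act_slope K D w (Suc l) (outputs N M K D w b f y0 l) 0 (fst t) (snd t) (j, m)))
    (at 0)"
proof -
  let ?Y = "outputs N M K D w b f y0 l"
  let ?T = "index_box (N (Suc l)) (M (Suc l))"
  obtain G where G: "has_carat_gradient ?T (loss_at L N M K D w b f \<epsilon> (Suc l))
      (layer N M K D w b f (Suc l) ?Y) G"
    using loss_at_has_carat_gradient[of "Suc l"] \<open>l < L\<close> layer_supported by fastforce
  have dE_dy: "dE_dy L N M K D w b f \<epsilon> y0 (Suc l) (fst t) (snd t) = G t" if "t \<in> ?T" for t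
    unfolding dE_dy_def outputs.simps
    using has_carat_gradient_imp_has_real_derivative[OF G finite_index_box, of "fst t" "snd t"] that
    by (simp add: DERIV_imp_deriv)
  have "M (Suc l) + K (Suc l) = M l + 1" using lengths[of "Suc l"] \<open>l < L\<close> by simp
  from loss_at_backprop[OF \<open>l < L\<close> this _ G]
  have "has_carat_gradient (index_box (N l) (M l)) (loss_at L N M K D w b f \<epsilon> l) ?Y
      (\<lambda>s. \<Sum>t\<in>?T. G t * (deriv (f (Suc l) (fst t)) (pre_act N K D w b (Suc l) ?Y (fst t) (snd t)) *
        pre_act_slope K D w (Suc l) ?Y 0 (fst t) (snd t) s))"
    using activation_differentiable[of "Suc l"] \<open>l < L\<close> by simp
  from has_carat_gradient_imp_has_real_derivative[OF this finite_index_box assms(2)]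
  show ?thesis by (simp add: dE_dx_def dE_dy mult.assoc cong: sum.cong)
qed

end

theorem proposition2:
  fixes L :: nat and N M K D :: "nat \<Rightarrow> nat"
    and w :: "nat \<Rightarrow> nat \<Rightarrow> nat \<Rightarrow> nat \<Rightarrow> nat \<Rightarrow> real"
    and b :: "nat \<Rightarrow> nat \<Rightarrow> real"
    and f :: "nat \<Rightarrow> nat \<Rightarrow> real \<Rightarrow> real"
    and \<epsilon> :: "(nat \<Rightarrow> nat \<Rightarrow> real) \<Rightarrow> real"
    and y0 :: "nat \<Rightarrow> nat \<Rightarrow> real"
  assumes L2: "L \<ge> 2"
    and N0: "N 0 \<ge> 1" and M0: "M 0 \<ge> 1"
    and dims: "\<And>l. 1 \<le> l \<Longrightarrow> l \<le> L \<Longrightarrow>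
       N l \<ge> 1 \<and> K l \<ge> 1 \<and> D l \<ge> 1 \<and> M l \<ge> 1 \<and> M l + K l = M (l - 1) + 1"
    and f_diff: "\<And>l i x. 1 \<le> l \<Longrightarrow> l \<le> L \<Longrightarrow> 1 \<le> i \<Longrightarrow> i \<le> N l \<Longrightarrow>
       f l i differentiable (at x)"
    and eps_diff: "loss_differentiable (N L) (M L) \<epsilon>"
    and l: "1 \<le> l" "l \<le> L - 1"
    and j: "1 \<le> j" "j \<le> N l"
    and m: "m < M l"
  shows "((\<lambda>t. loss_at L N M K D w b f \<epsilon> l (perturb (outputs N M K D w b f y0 l) j m t))
          has_real_derivative
          (\<Sum>d=1..D (l + 1). real d *
             (\<Sum>i=1..N (l + 1).
                conv (K (l + 1))
                  (\<lambda>k. w (l + 1) i j d (K (l + 1) - 1 - k))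
                  (\<lambda>n. if K (l + 1) - 1 \<le> n \<and> n \<le> M (l + 1) + K (l + 1) - 2
                       then dE_dx L N M K D w b f \<epsilon> y0 (l + 1) i (n - (K (l + 1) - 1))
                       else 0)
                  m)
             * (outputs N M K D w b f y0 l j m) ^ (d - 1)))
         (at 0)"
proof -
  have "l < L" using l L2 by simp
  interpret polynomial_network L N M K D w b f \<epsilon>
    using dims f_diff eps_diff by unfold_locales blast+
  have "1 \<le> K (Suc l)" "1 \<le> M (Suc l)" using dims[of "Suc l"] \<open>l < L\<close> by simp_all
  note conv_sum = sum_conv_flipped_padded[OF this, where w = "\<lambda>i. w (Suc l) i j"
      and e = "dE_dx L N M K D w b f \<epsilon> y0 (Suc l)"]
  have "(j, m) \<in> index_box (N l) (M l)" using j m by (simp add: index_box_def)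
  from loss_at_has_real_derivative_backprop[of l j m y0, OF \<open>l < L\<close> this]
  show ?thesis
    unfolding Suc_eq_plus1[symmetric] conv_sum by (simp add: pre_act_slope_def cong: if_cong)
qed

end
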